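(* Let $p$ be a prime, $q=p^r$, $\mathscr{C}\subseteq\mathbb{F}_q^n$ a linear code over $\mathbb{F}_q$ of dimension $k$ with $1\le k<n$, and $\mathscr{D}=\{(\lambda,\ldots,\lambda):\lambda\in\mathbb{F}_{q^k}\}\subset\mathbb{F}_{q^k}^m$ ($m\ge2$). Let $f_1,\ldots,f_{q^k}:\mathscr{C}\to\mathbb{F}_p$ be functions such that the $q^k\times q^k$ matrix $H=[\zeta^{f_j(\mathbf{c})}]_{1\le j\le q^k,\ \mathbf{c}\in\mathscr{C}}$ is a normalized $\mathrm{BH}(q^k,p)$ matrix, i.e. $HH^\dagger=q^kI$, $f_1\equiv0$ and $f_j(\mathbf{0})=0$ for all $j$. Put $\phi_j=q^{-k/2}\sum_{\mathbf{c}\in\mathscr{C}}\zeta^{f_j(\mathbf{c})}|\mathbf{c}\rangle$ and $Q=\operatorname{span}\{\phi_j^{\otimes m}:1\le j\le q^k\}\subseteq(\mathbb{C}^q)^{\otimes nm}$. If $Q$ is a stabilizer code, then $H$ is equivalent to the $rk$-fold Kronecker product of the Fourier matrix $[\zeta^{(a-1)(b-1)}]_{a,b=1}^p$ of order $p$.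
   Context: $\zeta=e^{2\pi i/p}$; $\operatorname{tr}:\mathbb{F}_q\to\mathbb{F}_p$ is the trace; $\mathbf{u}.\mathbf{v}=\sum_iu_iv_i$. Qudits: $(\mathbb{C}^q)^{\otimes N}$ has orthonormal basis $|\mathbf{x}\rangle$, $\mathbf{x}\in\mathbb{F}_q^N$. $X(a)|x\rangle=|x+a\rangle$, $Z(b)|x\rangle=\zeta^{\operatorname{tr}(bx)}|x\rangle$, extended to $X(\mathbf{a}),Z(\mathbf{b})$ on $(\mathbb{C}^q)^{\otimes N}$ by tensor products. Error group $\mathcal{P}_N=\{\omega^cX(\mathbf{a})Z(\mathbf{b}):\mathbf{a},\mathbf{b}\in\mathbb{F}_q^N\}$ with $\omega=\zeta,c\in\mathbb{F}_p$ for odd $p$ and $\omega=i$, $c\in\{0,1,2,3\}$ for $p=2$. For a subspace $Q$, $\operatorname{Stab}(Q)=\{E\in\mathcal{P}_N:Ev=v\ \forall v\in Q\}$, and $Q$ is a stabilizer code if $Q=\{v:Ev=v\ \forall E\in\operatorname{Stab}(Q)\}$. A $\mathrm{BH}(N,p)$ matrix is an $N\times N$ matrix with entries $p$-th roots of unity and $HH^\dagger=NI$; two such matrices are equivalent if one is obtained from the other by permuting rows and columns and multiplying rows and columns by $p$-th roots of unity. *)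

theory Defs
  imports Complex_Main "HOL-Library.Cardinality" "HOL-Computational_Algebra.Primes"
begin

definition zeta :: "nat \<Rightarrow> complex" where
  "zeta p = cis (2 * pi / real p)"

definition trace :: "nat \<Rightarrow> nat \<Rightarrow> 'a::field \<Rightarrow> 'a" where
  "trace p r x = (\<Sum>i<r. x ^ (p ^ i))"

definition fp_rep :: "nat \<Rightarrow> 'a::field \<Rightarrow> nat" where
  "fp_rep p y = (THE i. i < p \<and> of_nat i = y)"

definition Fvec :: "nat \<Rightarrow> (nat \<Rightarrow> 'a::field) set" where
  "Fvec N = {x. \<forall>i\<ge>N. x i = 0}"

definition lin_comb :: "(nat \<Rightarrow> 'a::field) set \<Rightarrow> ((nat \<Rightarrow> 'a) \<Rightarrow> 'a) \<Rightarrow> (nat \<Rightarrow> 'a)" where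
  "lin_comb B l = (\<lambda>i. \<Sum>b\<in>B. l b * b i)"

definition linear_code :: "nat \<Rightarrow> nat \<Rightarrow> (nat \<Rightarrow> 'a::field) set \<Rightarrow> bool" where
  "linear_code n k C \<longleftrightarrow> C \<subseteq> Fvec n \<and>
     (\<exists>B. finite B \<and> card B = k \<and> B \<subseteq> C \<and>
        (\<forall>l. lin_comb B l = (\<lambda>_. 0) \<longrightarrow> (\<forall>b\<in>B. l b = 0)) \<and>
        C = {lin_comb B l | l. True})"

section \<open>Qudit space (C^q)^{tensor N}: complex functions on F_q^N\<close>

definition qspace :: "nat \<Rightarrow> ((nat \<Rightarrow> 'a::field) \<Rightarrow> complex) set" where
  "qspace N = {v. \<forall>x. x \<notin> Fvec N \<longrightarrow> v x = 0}"

definition phases :: "nat \<Rightarrow> complex set" where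
  "phases p = (if p = 2 then {\<i> ^ c | c. c < 4} else {zeta p ^ c | c. c < p})"

text \<open>Error group P_N, an element omega^c X(a) Z(b) represented by (omega^c, a, b).\<close>
definition pauli :: "nat \<Rightarrow> nat \<Rightarrow> (complex \<times> (nat \<Rightarrow> 'a::field) \<times> (nat \<Rightarrow> 'a)) set" where
  "pauli p N = {(w, a, b). w \<in> phases p \<and> a \<in> Fvec N \<and> b \<in> Fvec N}"

text \<open>Action: omega^c X(a) Z(b) |x> = omega^c zeta^{tr(b.x)} |x+a>.\<close>
definition pauli_act :: "nat \<Rightarrow> nat \<Rightarrow> nat \<Rightarrow> complex \<times> (nat \<Rightarrow> 'a::field) \<times> (nat \<Rightarrow> 'a)
    \<Rightarrow> ((nat \<Rightarrow> 'a) \<Rightarrow> complex) \<Rightarrow> ((nat \<Rightarrow> 'a) \<Rightarrow> complex)" where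
  "pauli_act p r N E v = (case E of (w, a, b) \<Rightarrow>
     (\<lambda>y. w * zeta p ^ fp_rep p (trace p r (\<Sum>i<N. b i * (y i - a i))) * v (\<lambda>i. y i - a i)))"

definition Stab :: "nat \<Rightarrow> nat \<Rightarrow> nat \<Rightarrow> ((nat \<Rightarrow> 'a::field) \<Rightarrow> complex) set
    \<Rightarrow> (complex \<times> (nat \<Rightarrow> 'a) \<times> (nat \<Rightarrow> 'a)) set" where
  "Stab p r N Q = {E \<in> pauli p N. \<forall>v\<in>Q. pauli_act p r N E v = v}"

definition stabilizer_code :: "nat \<Rightarrow> nat \<Rightarrow> nat \<Rightarrow> ((nat \<Rightarrow> 'a::field) \<Rightarrow> complex) set \<Rightarrow> bool" where
  "stabilizer_code p r N Q \<longleftrightarrow>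
     Q = {v \<in> qspace N. \<forall>E\<in>Stab p r N Q. pauli_act p r N E v = v}"

definition phi :: "nat \<Rightarrow> nat \<Rightarrow> (nat \<Rightarrow> 'a::field) set \<Rightarrow> (nat \<Rightarrow> (nat \<Rightarrow> 'a) \<Rightarrow> nat)
    \<Rightarrow> nat \<Rightarrow> (nat \<Rightarrow> 'a) \<Rightarrow> complex" where
  "phi p qk C f j x = (if x \<in> C then complex_of_real (1 / sqrt (real qk)) * zeta p ^ f j x else 0)"

definition block :: "nat \<Rightarrow> nat \<Rightarrow> (nat \<Rightarrow> 'a::field) \<Rightarrow> (nat \<Rightarrow> 'a)" where
  "block n t x = (\<lambda>i. if i < n then x (t * n + i) else 0)"

definition tensor_pow :: "nat \<Rightarrow> nat \<Rightarrow> ((nat \<Rightarrow> 'a::field) \<Rightarrow> complex) \<Rightarrow> ((nat \<Rightarrow> 'a) \<Rightarrow> complex)" where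
  "tensor_pow n m v = (\<lambda>x. if x \<in> Fvec (n * m) then (\<Prod>t<m. v (block n t x)) else 0)"

definition cspan_fin :: "nat \<Rightarrow> (nat \<Rightarrow> ('b \<Rightarrow> complex)) \<Rightarrow> ('b \<Rightarrow> complex) set" where
  "cspan_fin M g = {(\<lambda>x. \<Sum>j<M. w j * g j x) | w. True}"

definition bh_equiv :: "nat \<Rightarrow> ('r \<Rightarrow> 'c \<Rightarrow> complex) \<Rightarrow> 'r set \<Rightarrow> 'c set
    \<Rightarrow> ('s \<Rightarrow> 'd \<Rightarrow> complex) \<Rightarrow> 's set \<Rightarrow> 'd set \<Rightarrow> bool" where
  "bh_equiv p H R C K S D \<longleftrightarrow>
     (\<exists>\<sigma> \<tau> \<alpha> \<beta>. bij_betw \<sigma> R S \<and> bij_betw \<tau> C D \<and>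
        (\<forall>j\<in>R. \<alpha> j ^ p = 1) \<and> (\<forall>c\<in>C. \<beta> c ^ p = 1) \<and>
        (\<forall>j\<in>R. \<forall>c\<in>C. H j c = \<alpha> j * \<beta> c * K (\<sigma> j) (\<tau> c)))"

text \<open>Fourier matrix of order p, 0-indexed: entry (a,b) = zeta^(a*b).\<close>
definition fourier :: "nat \<Rightarrow> nat \<Rightarrow> nat \<Rightarrow> complex" where
  "fourier p a b = zeta p ^ (a * b)"

text \<open>L-fold Kronecker power of a p x p matrix F (0-indexed, standard ordering):
  F^{(L+1)} = F kron F^{(L)}.\<close>
fun kron_pow :: "nat \<Rightarrow> (nat \<Rightarrow> nat \<Rightarrow> complex) \<Rightarrow> nat \<Rightarrow> nat \<Rightarrow> nat \<Rightarrow> complex" where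
  "kron_pow p F 0 a b = 1"
| "kron_pow p F (Suc L) a b =
     F (a div p ^ L) (b div p ^ L) * kron_pow p F L (a mod p ^ L) (b mod p ^ L)"

end

theory Submission
  imports Defs "HOL-Number_Theory.Residues" "HOL-Library.Indicator_Function"
begin

text \<open>
  An element of the stabilizer of Q fixes the indicator of the support C^m of Q (a multiple of
  phi_1^{tensor m}). Hence its shift a lies in C^m and its phase is trivial on C^m, so on functions
  supported on C^m it acts as the translation by a. Consequently the indicator of the group of
  translations leaving Q pointwise invariant is fixed by the whole stabilizer and lies in Q.
  Expanding it in the states phi_j^{tensor m} and summing over the second block, where all rows of
  H but the first sum to zero, shows that every u in C is the first block of such a translation
  (u, z, 0, ..., 0). Invariance of phi_j^{tensor m} under these translations makes each row
  c |-> zeta^{f_j(c)} an additive character of C. Finally C is an rk-dimensional F_p-space, and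
  in coordinates with respect to an F_p-basis the rows of H are the characters of F_p^{rk}, whose
  table is the rk-fold Kronecker power of the Fourier matrix.
\<close>

section \<open>The prime subfield and base-p digits\<close>

lemma CHAR_eq_prime_of_card:
  assumes "prime p" "CARD('a::{finite,field}) = p ^ r"
  shows "CHAR('a) = p"
proof -
  have "prime CHAR('a)"
    by (intro prime_CHAR_semidom finite_imp_CHAR_pos) simp
  moreover have "CHAR('a) dvd p ^ r"
    using CHAR_dvd_CARD[where 'a='a] assms(2) by simp
  ultimately show ?thesis
    using assms(1) by (metis prime_dvd_power_nat primes_dvd_imp_eq)
qed

lemma exists_of_int_inverse:
  assumes "prime CHAR('a::field)" "\<not> int CHAR('a) dvd e"
  shows "\<exists>a. of_int a * of_int e = (1::'a)"
proof -
  have "prime (int CHAR('a))"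
    using assms(1) by simp
  hence "coprime e (int CHAR('a))"
    using prime_imp_coprime assms(2) coprime_commute by blast
  then obtain a where "[e * a = 1] (mod int CHAR('a))"
    using cong_solve_coprime_int by blast
  hence "of_int (e * a) = (1::'a)"
    using of_int_eq_iff_cong_CHAR[where 'a='a, of "e * a" 1] by simp
  thus ?thesis
    by (auto simp: mult.commute)
qed

definition digit :: "nat \<Rightarrow> nat \<Rightarrow> nat \<Rightarrow> nat" where
  "digit p i d = d div p ^ i mod p"

lemma digit_mod_power:
  assumes "0 < p" "i < l"
  shows "digit p i (d mod p ^ l) = digit p i d"
proof -
  have "p ^ l = p ^ i * p ^ (l - i)"
    using assms(2) by (simp flip: power_add)
  hence "d mod p ^ l = p ^ i * (d div p ^ i mod p ^ (l - i)) + d mod p ^ i"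
    by (simp add: mod_mult2_eq)
  hence "d mod p ^ l div p ^ i = d div p ^ i mod p ^ (l - i)"
    using assms(1) by simp
  moreover have "p dvd p ^ (l - i)"
    using assms(2) by simp
  ultimately show ?thesis
    unfolding digit_def by (simp add: mod_mod_cancel)
qed

lemma digit_last:
  assumes "d < p ^ Suc l"
  shows "digit p l d = d div p ^ l"
  using assms unfolding digit_def by (simp add: less_mult_imp_div_less mult.commute)

lemma sum_digits_less:
  fixes c :: "nat \<Rightarrow> nat"
  assumes "\<forall>i<l. c i < p"
  shows "(\<Sum>i<l. c i * p ^ i) < p ^ l"
  using assms
proof (induction l)
  case (Suc l)
  have IH: "(\<Sum>i<l. c i * p ^ i) < p ^ l"
    using Suc by simp
  have "(\<Sum>i<Suc l. c i * p ^ i) = (\<Sum>i<l. c i * p ^ i) + c l * p ^ l"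
    by simp
  also have "\<dots> < Suc (c l) * p ^ l"
    using IH by simp
  also have "\<dots> \<le> p * p ^ l"
    using Suc.prems by (intro mult_right_mono) auto
  finally show ?case
    by simp
qed simp

lemma digit_sum_digits:
  assumes "0 < p" "\<forall>i<l. c i < p" "i < l"
  shows "digit p i (\<Sum>i<l. c i * p ^ i) = c i"
  using assms(2,3)
proof (induction l)
  case (Suc l)
  let ?S = "\<Sum>i<l. c i * p ^ i"
  have S: "?S < p ^ l"
    using Suc.prems(1) by (simp add: sum_digits_less)
  show ?case
  proof (cases "i = l")
    case True
    have "(?S + c l * p ^ l) div p ^ l = c l"
      using S assms(1) by simp
    thus ?thesis
      using True Suc.prems(1) by (simp add: digit_def)
  next
    case False
    hence "i < l"
      using Suc.prems(2) by simp
    have "(?S + c l * p ^ l) mod p ^ l = ?S"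
      using S by simp
    hence "digit p i (?S + c l * p ^ l) = digit p i ?S"
      using digit_mod_power[OF assms(1) \<open>i < l\<close>] by metis
    also have "\<dots> = c i"
      using Suc \<open>i < l\<close> by simp
    finally show ?thesis
      by simp
  qed
qed simp

lemma kron_pow_eq_prod_digits:
  "a < p ^ L \<Longrightarrow> b < p ^ L \<Longrightarrow>
    kron_pow p F L a b = (\<Prod>i<L. F (digit p i a) (digit p i b))"
proof (induction L arbitrary: a b)
  case (Suc L)
  have "p > 0"
    using Suc.prems by (cases p) simp_all
  moreover have "(\<Prod>i<L. F (digit p i (a mod p ^ L)) (digit p i (b mod p ^ L)))
      = (\<Prod>i<L. F (digit p i a) (digit p i b))"
    using \<open>p > 0\<close> by (intro prod.cong) (simp_all add: digit_mod_power)
  ultimately show ?case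
    using Suc by (simp add: digit_last mult.commute)
qed simp

lemma kron_pow_fourier:
  assumes "a < p ^ L" "b < p ^ L"
  shows "kron_pow p (fourier p) L a b = zeta p ^ (\<Sum>i<L. digit p i a * digit p i b)"
  using assms by (simp add: kron_pow_eq_prod_digits fourier_def power_sum)

section \<open>Coordinates with respect to an F_p-basis\<close>

definition lin_closed :: "('b \<Rightarrow> 'a::field) set \<Rightarrow> bool" where
  "lin_closed C \<longleftrightarrow> (\<lambda>_. 0) \<in> C \<and> (\<forall>x\<in>C. \<forall>y\<in>C. (\<lambda>i. x i + y i) \<in> C)
     \<and> (\<forall>a. \<forall>x\<in>C. (\<lambda>i. a * x i) \<in> C)"

lemma lin_closed_zero: "lin_closed C \<Longrightarrow> (\<lambda>_. 0) \<in> C"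
  and lin_closed_add: "lin_closed C \<Longrightarrow> x \<in> C \<Longrightarrow> y \<in> C \<Longrightarrow> (\<lambda>i. x i + y i) \<in> C"
  and lin_closed_scale: "lin_closed C \<Longrightarrow> x \<in> C \<Longrightarrow> (\<lambda>i. a * x i) \<in> C"
  by (simp_all add: lin_closed_def)

lemma lin_closed_diff:
  assumes "lin_closed C" "x \<in> C" "y \<in> C"
  shows "(\<lambda>i. x i - y i) \<in> C"
  using lin_closed_add[OF assms(1,2) lin_closed_scale[OF assms(1,3), of "-1"]] by simp

lemma lin_closed_diff_iff:
  assumes "lin_closed S" "a \<in> S"
  shows "(\<lambda>i. y i - a i) \<in> S \<longleftrightarrow> y \<in> S"
  using lin_closed_add[OF assms(1) _ assms(2), of "\<lambda>i. y i - a i"] lin_closed_diff[OF assms(1) _ assms(2)]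
  by auto

lemma lin_closed_linear_code: "linear_code n k C \<Longrightarrow> lin_closed C"
  unfolding linear_code_def lin_closed_def
proof (elim conjE exE, intro conjI ballI allI)
  fix B assume C: "C = {lin_comb B l |l. True}"
  show "(\<lambda>_. 0) \<in> C"
    unfolding C by (auto intro: exI[of _ "\<lambda>_. 0"] simp: lin_comb_def)
  fix x y a assume "x \<in> C" "y \<in> C"
  then obtain lx ly where "x = lin_comb B lx" "y = lin_comb B ly"
    unfolding C by blast
  show "(\<lambda>i. x i + y i) \<in> C"
    unfolding C \<open>x = _\<close> \<open>y = _\<close> lin_comb_def
    by (auto intro!: exI[of _ "\<lambda>b. lx b + ly b"] simp: sum.distrib distrib_right)
  show "(\<lambda>i. a * x i) \<in> C"
    unfolding C \<open>x = _\<close> lin_comb_def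
    by (auto intro!: exI[of _ "\<lambda>b. a * lx b"] simp: sum_distrib_left mult.assoc)
qed

(* Integer coefficients stand for elements of the prime field; unlike nat they are closed under
   subtraction, which the injectivity argument below needs. *)
definition int_comb :: "nat \<Rightarrow> (nat \<Rightarrow> 'b \<Rightarrow> 'a::field) \<Rightarrow> (nat \<Rightarrow> int) \<Rightarrow> 'b \<Rightarrow> 'a" where
  "int_comb l g c = (\<lambda>x. \<Sum>i<l. of_int (c i) * g i x)"

lemma int_comb_Suc: "int_comb (Suc l) g c = (\<lambda>x. int_comb l g c x + of_int (c l) * g l x)"
  by (simp add: int_comb_def)

lemma int_comb_diff: "int_comb l g c x - int_comb l g c' x = int_comb l g (\<lambda>i. c i - c' i) x"
  by (simp add: int_comb_def sum_subtractf left_diff_distrib)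

lemma int_comb_scale: "of_int a * int_comb l g c x = int_comb l g (\<lambda>i. a * c i) x"
  by (simp add: int_comb_def sum_distrib_left mult.assoc)

lemma int_comb_fun_upd: "int_comb l (g(l := y)) = int_comb l g"
  by (simp add: int_comb_def fun_eq_iff)

lemma int_comb_mem:
  assumes "lin_closed C" "\<forall>i<l. g i \<in> C"
  shows "int_comb l g c \<in> C"
  using assms(2)
proof (induction l)
  case 0
  show ?case
    using lin_closed_zero[OF assms(1)] by (simp add: int_comb_def)
next
  case (Suc l)
  thus ?case
    using lin_closed_add[OF assms(1) _ lin_closed_scale[OF assms(1)]]
    by (simp add: int_comb_Suc)
qed

definition digit_comb :: "nat \<Rightarrow> nat \<Rightarrow> (nat \<Rightarrow> 'b \<Rightarrow> 'a::field) \<Rightarrow> nat \<Rightarrow> 'b \<Rightarrow> 'a" where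
  "digit_comb p l g d = int_comb l g (\<lambda>i. int (digit p i d))"

lemma digit_comb_Suc:
  assumes "0 < p" "d < p ^ Suc l"
  shows "digit_comb p (Suc l) g d x = digit_comb p l g (d mod p ^ l) x + of_nat (d div p ^ l) * g l x"
proof -
  have "int_comb l g (\<lambda>i. int (digit p i (d mod p ^ l))) = int_comb l g (\<lambda>i. int (digit p i d))"
    using digit_mod_power[OF assms(1)] by (simp add: int_comb_def)
  thus ?thesis
    using digit_last[OF assms(2)] by (simp add: digit_comb_def int_comb_Suc)
qed

lemma range_int_comb:
  assumes "CHAR('a) = p" "0 < p"
  shows "range (int_comb l (g :: nat \<Rightarrow> 'b \<Rightarrow> 'a::field)) = digit_comb p l g ` {..<p ^ l}"
proof
  show "digit_comb p l g ` {..<p ^ l} \<subseteq> range (int_comb l g)"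
    by (auto simp: digit_comb_def)
next
  show "range (int_comb l g) \<subseteq> digit_comb p l g ` {..<p ^ l}"
  proof clarify
    fix c
    define c' :: "nat \<Rightarrow> nat" where "c' i = nat (c i mod int p)" for i
    define d where "d = (\<Sum>i<l. c' i * p ^ i)"
    have c': "\<forall>i<l. c' i < p"
      using assms(2) by (simp add: c'_def nat_less_iff)
    have "of_int (int (digit p i d)) = (of_int (c i) :: 'a)" if "i < l" for i
      using digit_sum_digits[OF assms(2) c' that] assms
      by (simp add: d_def c'_def of_int_eq_iff_cong_CHAR[where 'a='a])
    hence "digit_comb p l g d = int_comb l g c"
      by (simp add: digit_comb_def int_comb_def)
    moreover have "d < p ^ l"
      using sum_digits_less[OF c'] by (simp add: d_def)
    ultimately show "int_comb l g c \<in> digit_comb p l g ` {..<p ^ l}"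
      by (metis imageI lessThan_iff)
  qed
qed

lemma inj_on_digit_comb_extend:
  assumes "prime p" "CHAR('a) = p"
    and inj: "inj_on (digit_comb p l g) {..<p ^ l}"
    and new: "y \<notin> range (int_comb l (g :: nat \<Rightarrow> 'b \<Rightarrow> 'a::field))"
  shows "inj_on (digit_comb p (Suc l) (g(l := y))) {..<p ^ Suc l}"
proof
  fix d d' assume d: "d \<in> {..<p ^ Suc l}" and d': "d' \<in> {..<p ^ Suc l}"
    and eq: "digit_comb p (Suc l) (g(l := y)) d = digit_comb p (Suc l) (g(l := y)) d'"
  have "0 < p"
    using assms(1) prime_gt_0_nat by blast
  define c where "c = int (d div p ^ l) - int (d' div p ^ l)"
  have split: "digit_comb p (Suc l) (g(l := y)) e x
      = digit_comb p l g (e mod p ^ l) x + of_nat (e div p ^ l) * y x" if "e < p ^ Suc l" for e x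
    using digit_comb_Suc[OF \<open>0 < p\<close> that, of "g(l := y)" x]
    by (simp add: digit_comb_def int_comb_fun_upd)
  have "of_int c * y x = digit_comb p l g (d' mod p ^ l) x - digit_comb p l g (d mod p ^ l) x" for x
    using fun_cong[OF eq, of x] d d' by (simp add: split c_def algebra_simps)
  hence y: "of_int c * y x = int_comb l g (\<lambda>i. int (digit p i (d' mod p ^ l)) - int (digit p i (d mod p ^ l))) x" for x
    by (simp add: digit_comb_def int_comb_diff)
  have "c = 0"
  proof (rule ccontr)
    assume "c \<noteq> 0"
    moreover have "d div p ^ l < p" "d' div p ^ l < p"
      using d d' by (simp_all add: less_mult_imp_div_less mult.commute)
    hence "\<bar>c\<bar> < int p"
      by (simp add: c_def)
    ultimately have "\<not> int CHAR('a) dvd c"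
      using assms(2) dvd_imp_le_int[of c "int p"] by auto
    then obtain a where a: "of_int a * of_int c = (1::'a)"
      using exists_of_int_inverse assms by blast
    have "y = int_comb l g (\<lambda>i. a * (int (digit p i (d' mod p ^ l)) - int (digit p i (d mod p ^ l))))"
    proof
      fix x
      have "y x = of_int a * (of_int c * y x)"
        using a by (simp flip: mult.assoc)
      thus "y x = int_comb l g (\<lambda>i. a * (int (digit p i (d' mod p ^ l)) - int (digit p i (d mod p ^ l)))) x"
        by (simp only: y int_comb_scale)
    qed
    thus False
      using new by blast
  qed
  hence "digit_comb p l g (d mod p ^ l) = digit_comb p l g (d' mod p ^ l)"
    using y by (auto simp: fun_eq_iff digit_comb_def int_comb_diff[symmetric])
  hence "d mod p ^ l = d' mod p ^ l"
    using inj_onD[OF inj] \<open>0 < p\<close> by simp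
  moreover have "d div p ^ l = d' div p ^ l"
    using \<open>c = 0\<close> by (simp add: c_def)
  ultimately show "d = d'"
    by (metis div_mult_mod_eq)
qed

lemma exists_inj_digit_comb:
  assumes "prime p" "CHAR('a) = p" "finite C" "card (C :: ('b \<Rightarrow> 'a::field) set) = p ^ L"
  shows "l \<le> L \<Longrightarrow> \<exists>g. (\<forall>i<l. g i \<in> C) \<and> inj_on (digit_comb p l g) {..<p ^ l}"
proof (induction l)
  case 0
  show ?case
    by (simp add: inj_on_def)
next
  case (Suc l)
  obtain g where g: "\<forall>i<l. g i \<in> C" "inj_on (digit_comb p l g) {..<p ^ l}"
    using Suc by auto
  have span: "range (int_comb l g) = digit_comb p l g ` {..<p ^ l}"
    using range_int_comb[OF assms(2)] assms(1) prime_gt_0_nat by blast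
  have "p ^ l < p ^ L"
    using Suc.prems prime_gt_1_nat[OF assms(1)] by (intro power_strict_increasing) simp_all
  hence "card (range (int_comb l g)) < card C"
    using g(2) assms(4) by (simp add: span card_image)
  hence "\<not> C \<subseteq> range (int_comb l g)"
    using card_mono[of "range (int_comb l g)" C] by (auto simp: span)
  then obtain y where y: "y \<in> C" "y \<notin> range (int_comb l g)"
    by blast
  have "\<forall>i<Suc l. (g(l := y)) i \<in> C"
    using g(1) y(1) by (simp add: less_Suc_eq)
  thus ?case
    using inj_on_digit_comb_extend[OF assms(1,2) g(2) y(2)] by blast
qed

lemma exists_digit_basis:
  assumes "prime p" "CHAR('a) = p" "lin_closed C" "finite C" "card (C :: ('b \<Rightarrow> 'a::field) set) = p ^ L"
  obtains g where "\<forall>i<L. g i \<in> C" "bij_betw (digit_comb p L g) {..<p ^ L} C"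
proof -
  obtain g where g: "\<forall>i<L. g i \<in> C" "inj_on (digit_comb p L g) {..<p ^ L}"
    using exists_inj_digit_comb[OF assms(1,2,4,5)] by blast
  have "digit_comb p L g ` {..<p ^ L} \<subseteq> C"
    using int_comb_mem[OF assms(3) g(1)] by (auto simp: digit_comb_def)
  moreover have "card (digit_comb p L g ` {..<p ^ L}) = card C"
    using g(2) assms(5) by (simp add: card_image)
  ultimately have "digit_comb p L g ` {..<p ^ L} = C"
    using assms(4) by (simp add: card_subset_eq)
  thus ?thesis
    using that g unfolding bij_betw_def by blast
qed

section \<open>Additive characters and the Fourier matrix\<close>

definition character_on :: "('b \<Rightarrow> 'a::field) set \<Rightarrow> (('b \<Rightarrow> 'a) \<Rightarrow> 'c::comm_monoid_mult) \<Rightarrow> bool" where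
  "character_on C h \<longleftrightarrow> h (\<lambda>_. 0) = 1 \<and> (\<forall>x\<in>C. \<forall>y\<in>C. h (\<lambda>i. x i + y i) = h x * h y)"

lemma character_on_of_nat_scale:
  assumes "character_on C h" "lin_closed C" "y \<in> C"
  shows "h (\<lambda>x. of_nat e * y x) = h y ^ e"
proof (induction e)
  case 0
  show ?case
    using assms(1) by (simp add: character_on_def)
next
  case (Suc e)
  have "h (\<lambda>x. of_nat (Suc e) * y x) = h (\<lambda>x. y x + of_nat e * y x)"
    by (simp add: algebra_simps)
  also have "\<dots> = h y * h (\<lambda>x. of_nat e * y x)"
    using assms lin_closed_scale[OF assms(2,3), of "of_nat e"] by (simp add: character_on_def)
  finally show ?case
    using Suc by simp
qed

lemma character_on_int_comb:
  assumes "character_on C h" "lin_closed C" "\<forall>i<l. g i \<in> C"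
  shows "h (int_comb l g (\<lambda>i. int (c i))) = (\<Prod>i<l. h (g i) ^ c i)"
  using assms(3)
proof (induction l)
  case 0
  show ?case
    using assms(1) by (simp add: character_on_def int_comb_def)
next
  case (Suc l)
  have "h (int_comb (Suc l) g (\<lambda>i. int (c i)))
      = h (\<lambda>x. int_comb l g (\<lambda>i. int (c i)) x + of_nat (c l) * g l x)"
    by (simp add: int_comb_Suc)
  also have "\<dots> = h (int_comb l g (\<lambda>i. int (c i))) * h (\<lambda>x. of_nat (c l) * g l x)"
    using assms(1) int_comb_mem[OF assms(2)] lin_closed_scale[OF assms(2)] Suc.prems
    by (simp add: character_on_def)
  also have "\<dots> = h (int_comb l g (\<lambda>i. int (c i))) * h (g l) ^ c l"
    using character_on_of_nat_scale[OF assms(1,2)] Suc.prems by simp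
  finally show ?case
    using Suc by simp
qed

lemma zeta_power_mult_cnj: "zeta p ^ a * cnj (zeta p) ^ a = 1"
  by (simp add: zeta_def cis_cnj cis_mult flip: power_mult_distrib)

lemma character_digit_comb_eq_kron_fourier:
  assumes "0 < p" "character_on C (\<lambda>c. zeta p ^ f c)" "lin_closed C"
    and "\<forall>i<L. g i \<in> C" "\<forall>i<L. f (g i) < p" "d < p ^ L"
  shows "zeta p ^ f (digit_comb p L g d) = kron_pow p (fourier p) L (\<Sum>i<L. f (g i) * p ^ i) d"
proof -
  have "zeta p ^ f (digit_comb p L g d) = (\<Prod>i<L. (zeta p ^ f (g i)) ^ digit p i d)"
    using character_on_int_comb[OF assms(2-4)] by (simp add: digit_comb_def)
  also have "\<dots> = zeta p ^ (\<Sum>i<L. digit p i (\<Sum>i<L. f (g i) * p ^ i) * digit p i d)"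
    using digit_sum_digits[OF assms(1,5)] by (simp add: power_sum power_mult)
  also have "\<dots> = kron_pow p (fourier p) L (\<Sum>i<L. f (g i) * p ^ i) d"
    using kron_pow_fourier[OF sum_digits_less[OF assms(5)] assms(6)] by simp
  finally show ?thesis .
qed

lemma bh_equiv_kron_fourier_of_characters:
  fixes C :: "('b \<Rightarrow> 'a::field) set"
  assumes "prime p" "CHAR('a) = p" "lin_closed C" "finite C" "card C = p ^ L"
    and entries_less: "\<forall>j<p ^ L. \<forall>c\<in>C. f j c < p"
    and characters: "\<forall>j<p ^ L. character_on C (\<lambda>c. zeta p ^ f j c)"
    and distinct: "\<forall>j<p ^ L. \<forall>j'<p ^ L. (\<forall>c\<in>C. zeta p ^ f j c = zeta p ^ f j' c) \<longrightarrow> j = j'"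
  shows "bh_equiv p (\<lambda>j c. zeta p ^ f j c) {..<p ^ L} C (kron_pow p (fourier p) L) {..<p ^ L} {..<p ^ L}"
proof -
  obtain g where g: "\<forall>i<L. g i \<in> C" "bij_betw (digit_comb p L g) {..<p ^ L} C"
    using exists_digit_basis[OF assms(1-5)] by blast
  define \<sigma> where "\<sigma> j = (\<Sum>i<L. f j (g i) * p ^ i)" for j
  define \<tau> where "\<tau> = the_inv_into {..<p ^ L} (digit_comb p L g)"
  have f_g: "\<forall>i<L. f j (g i) < p" if "j < p ^ L" for j
    using entries_less g(1) that by simp
  have entry: "zeta p ^ f j (digit_comb p L g d) = kron_pow p (fourier p) L (\<sigma> j) d"
    if "j < p ^ L" "d < p ^ L" for j d
    unfolding \<sigma>_def using assms(1,3) characters that g(1) f_g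
    by (intro character_digit_comb_eq_kron_fourier) (simp_all add: prime_gt_0_nat)
  have "inj_on \<sigma> {..<p ^ L}"
  proof (rule inj_onI)
    fix j j' assume j: "j \<in> {..<p ^ L}" and j': "j' \<in> {..<p ^ L}" and "\<sigma> j = \<sigma> j'"
    hence "zeta p ^ f j c = zeta p ^ f j' c" if "c \<in> C" for c
      using that g(2) entry by (auto simp: bij_betw_def)
    thus "j = j'"
      using distinct j j' by blast
  qed
  moreover have "\<sigma> j < p ^ L" if "j < p ^ L" for j
    unfolding \<sigma>_def using f_g[OF that] by (rule sum_digits_less)
  ultimately have "bij_betw \<sigma> {..<p ^ L} {..<p ^ L}"
    by (simp add: bij_betw_def endo_inj_surj image_subset_iff)
  moreover have "bij_betw \<tau> C {..<p ^ L}"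
    unfolding \<tau>_def using g(2) by (rule bij_betw_the_inv_into)
  moreover have "zeta p ^ f j c = 1 * 1 * kron_pow p (fourier p) L (\<sigma> j) (\<tau> c)"
    if "j < p ^ L" "c \<in> C" for j c
  proof -
    have "\<tau> c < p ^ L"
      using bij_betw_apply[OF calculation(2) that(2)] by simp
    moreover have "digit_comb p L g (\<tau> c) = c"
      unfolding \<tau>_def using g(2) that(2) by (rule f_the_inv_into_f_bij_betw)
    ultimately show ?thesis
      using entry[OF that(1), of "\<tau> c"] by simp
  qed
  ultimately show ?thesis
    unfolding bh_equiv_def by (intro exI[of _ \<sigma>] exI[of _ \<tau>] exI[of _ "\<lambda>_. 1"]) auto
qed

section \<open>Translation symmetries of stabilizer codes\<close>

definition periods :: "nat \<Rightarrow> ((nat \<Rightarrow> 'a::field) \<Rightarrow> complex) set \<Rightarrow> (nat \<Rightarrow> 'a) set" where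
  "periods N Q = {a \<in> Fvec N. \<forall>v\<in>Q. \<forall>y. v (\<lambda>i. y i - a i) = v y}"

lemma periodsD: "a \<in> periods N Q \<Longrightarrow> v \<in> Q \<Longrightarrow> v (\<lambda>i. y i - a i) = v y"
  by (simp add: periods_def)

lemma zero_mem_periods: "(\<lambda>_. 0) \<in> periods N Q"
  by (simp add: periods_def Fvec_def)

lemma periods_add:
  assumes "a \<in> periods N Q" "b \<in> periods N Q"
  shows "(\<lambda>i. a i + b i) \<in> periods N Q"
proof -
  have "v (\<lambda>i. y i - (a i + b i)) = v y" if "v \<in> Q" for v y
  proof -
    have "v (\<lambda>i. y i - (a i + b i)) = v (\<lambda>i. (y i - b i) - a i)"
      by (simp add: algebra_simps)
    also have "\<dots> = v y"
      using periodsD[OF assms(1) that] periodsD[OF assms(2) that] by simp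
    finally show ?thesis .
  qed
  thus ?thesis
    using assms by (simp add: periods_def Fvec_def)
qed

lemma periods_diff:
  assumes "a \<in> periods N Q" "b \<in> periods N Q"
  shows "(\<lambda>i. a i - b i) \<in> periods N Q"
proof -
  have "v (\<lambda>i. y i - (a i - b i)) = v y" if "v \<in> Q" for v y
  proof -
    have "v (\<lambda>i. y i - (a i - b i)) = v (\<lambda>i. (y i + b i) - a i)"
      by (simp add: algebra_simps)
    also have "\<dots> = v (\<lambda>i. y i + b i)"
      using periodsD[OF assms(1) that] .
    also have "\<dots> = v y"
      using periodsD[OF assms(2) that, of "\<lambda>i. y i + b i"] by simp
    finally show ?thesis .
  qed
  thus ?thesis
    using assms by (simp add: periods_def Fvec_def)
qed

lemma periods_diff_iff:
  assumes "a \<in> periods N Q"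
  shows "(\<lambda>i. y i - a i) \<in> periods N Q \<longleftrightarrow> y \<in> periods N Q"
  using periods_add[OF _ assms, of "\<lambda>i. y i - a i"] periods_diff[OF _ assms] by auto

lemma pauli_act_shift:
  assumes "w \<in> phases p"
  obtains \<rho> where "\<forall>y. \<rho> y \<noteq> 0" "\<forall>v. pauli_act p r N (w, a, b) v = (\<lambda>y. \<rho> y * v (\<lambda>i. y i - a i))"
proof
  show "\<forall>y. w * zeta p ^ fp_rep p (trace p r (\<Sum>i<N. b i * (y i - a i))) \<noteq> 0"
    using assms by (auto simp: phases_def zeta_def split: if_splits)
qed (simp add: pauli_act_def)

lemma shift_fixing_indicator:
  assumes "lin_closed S" "\<rho> a \<noteq> 0"
    and fixes_S: "\<forall>y. \<rho> y * indicator S (\<lambda>i. y i - a i) = (indicator S y :: complex)"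
  shows "a \<in> S" and "\<forall>y\<in>S. \<rho> y = 1"
proof -
  show "a \<in> S"
    using fixes_S[rule_format, of a] assms(2) lin_closed_zero[OF assms(1)]
    by (auto simp: indicator_def split: if_splits)
  thus "\<forall>y\<in>S. \<rho> y = 1"
    using fixes_S lin_closed_diff_iff[OF assms(1)] by (auto simp: indicator_def)
qed

lemma Stab_acts_as_translation:
  assumes E: "(w, a, b) \<in> Stab p r N Q" and "lin_closed S" "indicator S \<in> Q"
  obtains \<rho> where "a \<in> S" "\<forall>y\<in>S. \<rho> y = 1"
    and "\<forall>v\<in>Q. \<forall>y. \<rho> y * v (\<lambda>i. y i - a i) = v y"
    and "\<forall>v. pauli_act p r N (w, a, b) v = (\<lambda>y. \<rho> y * v (\<lambda>i. y i - a i))"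
proof -
  have "w \<in> phases p"
    using E by (simp add: Stab_def pauli_def)
  then obtain \<rho> where "\<forall>y. \<rho> y \<noteq> 0"
    and act: "\<forall>v. pauli_act p r N (w, a, b) v = (\<lambda>y. \<rho> y * v (\<lambda>i. y i - a i))"
    by (rule pauli_act_shift)
  moreover have fixes_Q: "\<forall>v\<in>Q. \<forall>y. \<rho> y * v (\<lambda>i. y i - a i) = v y"
    using E act by (simp add: Stab_def fun_eq_iff)
  ultimately show ?thesis
    using that shift_fixing_indicator[OF assms(2)] assms(3) by blast
qed

lemma indicator_periods_mem_stabilizer_code:
  assumes stab: "stabilizer_code p r N Q" and S: "lin_closed S"
    and support: "\<forall>v\<in>Q. \<forall>x. x \<notin> S \<longrightarrow> v x = 0" and "indicator S \<in> Q"
  shows "indicator (periods N Q) \<in> Q"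
proof -
  let ?P = "periods N Q"
  have P_S: "?P \<subseteq> S"
  proof
    fix a assume "a \<in> ?P"
    hence "indicator S (\<lambda>i. a i - a i) = (indicator S a :: complex)"
      using \<open>indicator S \<in> Q\<close> by (rule periodsD)
    thus "a \<in> S"
      using lin_closed_zero[OF S] by (simp add: indicator_def split: if_splits)
  qed
  have "pauli_act p r N (w, a, b) (indicator ?P) = indicator ?P" if E: "(w, a, b) \<in> Stab p r N Q" for w a b
  proof -
    obtain \<rho> where "a \<in> S" and \<rho>_S: "\<forall>y\<in>S. \<rho> y = 1"
      and fixes_Q: "\<forall>v\<in>Q. \<forall>y. \<rho> y * v (\<lambda>i. y i - a i) = v y"
      and act: "\<forall>v. pauli_act p r N (w, a, b) v = (\<lambda>y. \<rho> y * v (\<lambda>i. y i - a i))"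
      using Stab_acts_as_translation[OF E S \<open>indicator S \<in> Q\<close>] by blast
    have shift_S: "(\<lambda>i. y i - a i) \<in> S \<longleftrightarrow> y \<in> S" for y
      by (rule lin_closed_diff_iff[OF S \<open>a \<in> S\<close>])
    have "v (\<lambda>i. y i - a i) = v y" if "v \<in> Q" for v y
    proof (cases "y \<in> S")
      case True
      thus ?thesis
        using fixes_Q[rule_format, OF that, of y] \<rho>_S by simp
    next
      case False
      thus ?thesis
        using shift_S by (simp add: support[rule_format, OF that])
    qed
    moreover have "a \<in> Fvec N"
      using E by (simp add: Stab_def pauli_def)
    ultimately have "a \<in> ?P"
      by (simp add: periods_def)
    have "\<rho> y * indicator ?P (\<lambda>i. y i - a i) = (indicator ?P y :: complex)" for y
    proof (cases "y \<in> S")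
      case True
      thus ?thesis
        using \<rho>_S periods_diff_iff[OF \<open>a \<in> ?P\<close>] by (simp add: indicator_def)
    next
      case False
      thus ?thesis
        using P_S shift_S by (auto simp: indicator_def)
    qed
    thus ?thesis
      using act by simp
  qed
  moreover have "indicator ?P \<in> qspace N"
    by (simp add: qspace_def periods_def)
  ultimately show ?thesis
    using stab unfolding stabilizer_code_def by auto
qed

section \<open>Tensor powers of the row states\<close>

definition product_code :: "nat \<Rightarrow> nat \<Rightarrow> (nat \<Rightarrow> 'a::field) set \<Rightarrow> (nat \<Rightarrow> 'a) set" where
  "product_code n m C = {x \<in> Fvec (n * m). \<forall>t<m. block n t x \<in> C}"

lemma lin_closed_product_code:
  assumes "lin_closed C"
  shows "lin_closed (product_code n m C)"
proof -
  have "block n t (\<lambda>_. 0 :: 'a) = (\<lambda>_. 0)"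
    and "block n t (\<lambda>i. x i + y i) = (\<lambda>i. block n t x i + block n t y i)"
    and "block n t (\<lambda>i. a * x i) = (\<lambda>i. a * block n t x i)" for t x y and a :: 'a
    by (simp_all add: block_def fun_eq_iff)
  thus ?thesis
    using assms by (simp add: lin_closed_def product_code_def Fvec_def)
qed

lemma tensor_pow_phi:
  "tensor_pow n m (phi p N C f j) x =
    (if x \<in> product_code n m C
     then complex_of_real (1 / sqrt (real N)) ^ m * (\<Prod>t<m. zeta p ^ f j (block n t x)) else 0)"
proof (cases "x \<in> product_code n m C")
  case True
  thus ?thesis
    by (simp add: tensor_pow_def phi_def product_code_def prod_dividef power_one_over)
next
  case False
  thus ?thesis
    by (auto simp: tensor_pow_def phi_def product_code_def)
qed

definition two_blocks :: "nat \<Rightarrow> (nat \<Rightarrow> 'a::field) \<Rightarrow> (nat \<Rightarrow> 'a) \<Rightarrow> nat \<Rightarrow> 'a" where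
  "two_blocks n u z = (\<lambda>i. if i < n then u i else if i < 2 * n then z (i - n) else 0)"

lemma two_blocks_zero: "two_blocks n (\<lambda>_. 0) (\<lambda>_. 0) = (\<lambda>_. 0)"
  by (simp add: two_blocks_def fun_eq_iff)

lemma two_blocks_diff:
  "(\<lambda>i. two_blocks n u z i - two_blocks n u' z' i) = two_blocks n (\<lambda>i. u i - u' i) (\<lambda>i. z i - z' i)"
  by (simp add: two_blocks_def fun_eq_iff)

lemma block_two_blocks:
  assumes "u \<in> Fvec n" "z \<in> Fvec n"
  shows "block n t (two_blocks n u z) = (if t = 0 then u else if t = 1 then z else (\<lambda>_. 0))"
proof -
  consider "t = 0" | "t = 1" | "2 \<le> t"
    by linarith
  thus ?thesis
  proof cases
    case 3
    hence "2 * n \<le> t * n"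
      by (rule mult_right_mono) simp
    hence "\<not> t * n + i < n" "\<not> t * n + i < 2 * n" for i
      by linarith+
    thus ?thesis
      using 3 by (auto simp: block_def two_blocks_def fun_eq_iff)
  qed (use assms in \<open>auto simp: block_def two_blocks_def Fvec_def fun_eq_iff\<close>)
qed

lemma two_blocks_mem_product_code:
  assumes "lin_closed C" "C \<subseteq> Fvec n" "u \<in> C" "z \<in> C" "2 \<le> m"
  shows "two_blocks n u z \<in> product_code n m C"
proof -
  have "2 * n \<le> n * m"
    using assms(5) by simp
  hence "\<not> i < n" "\<not> i < 2 * n" if "n * m \<le> i" for i
    using that by linarith+
  hence "two_blocks n u z \<in> Fvec (n * m)"
    by (auto simp: Fvec_def two_blocks_def)
  moreover have "u \<in> Fvec n" "z \<in> Fvec n"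
    using assms(2-4) by auto
  ultimately show ?thesis
    using assms(3,4) lin_closed_zero[OF assms(1)] by (simp add: product_code_def block_two_blocks)
qed

lemma tensor_pow_phi_two_blocks:
  assumes "lin_closed C" "C \<subseteq> Fvec n" "u \<in> C" "z \<in> C" "2 \<le> m" "f j (\<lambda>_. 0) = 0"
  shows "tensor_pow n m (phi p N C f j) (two_blocks n u z)
    = complex_of_real (1 / sqrt (real N)) ^ m * (zeta p ^ f j u * zeta p ^ f j z)"
proof -
  obtain m' where m: "m = Suc (Suc m')"
    using assms(5) by (metis add_2_eq_Suc le_Suc_ex)
  have "u \<in> Fvec n" "z \<in> Fvec n"
    using assms(2-4) by auto
  hence "(\<Prod>t<m. zeta p ^ f j (block n t (two_blocks n u z))) = zeta p ^ f j u * zeta p ^ f j z"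
    using assms(6) unfolding m prod.lessThan_Suc_shift by (simp add: block_two_blocks)
  thus ?thesis
    using two_blocks_mem_product_code[OF assms(1-5)] by (simp add: tensor_pow_phi)
qed

lemma cspan_fin_generator: "j < M \<Longrightarrow> g j \<in> cspan_fin M g"
  unfolding cspan_fin_def by (auto intro!: exI[of _ "\<lambda>i. of_bool (i = j)"] simp: fun_eq_iff)

lemma cspan_fin_scale:
  assumes "v \<in> cspan_fin M g"
  shows "(\<lambda>x. c * v x) \<in> cspan_fin M g"
proof -
  obtain w where "v = (\<lambda>x. \<Sum>j<M. w j * g j x)"
    using assms by (auto simp: cspan_fin_def)
  thus ?thesis
    unfolding cspan_fin_def by (auto intro!: exI[of _ "\<lambda>j. c * w j"] simp: sum_distrib_left mult.assoc)
qed

locale bh_tensor_states =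
  fixes p n m N :: nat and C :: "(nat \<Rightarrow> 'a::field) set" and f :: "nat \<Rightarrow> (nat \<Rightarrow> 'a) \<Rightarrow> nat"
  assumes lin_closed_C: "lin_closed C" and C_Fvec: "C \<subseteq> Fvec n"
    and N_pos: "0 < N" and m_ge_2: "2 \<le> m"
    and first_row: "\<forall>c\<in>C. f 0 c = 0" and first_column: "\<forall>j<N. f j (\<lambda>_. 0) = 0"
    and orthogonal: "\<forall>j<N. \<forall>j'<N.
      (\<Sum>c\<in>C. zeta p ^ f j c * cnj (zeta p ^ f j' c)) = (if j = j' then of_nat N else 0)"
begin

abbreviation state :: "nat \<Rightarrow> (nat \<Rightarrow> 'a) \<Rightarrow> complex" where
  "state j \<equiv> tensor_pow n m (phi p N C f j)"

abbreviation Q :: "((nat \<Rightarrow> 'a) \<Rightarrow> complex) set" where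
  "Q \<equiv> cspan_fin N state"

abbreviation norm_factor :: complex where
  "norm_factor \<equiv> complex_of_real (1 / sqrt (real N)) ^ m"

lemma norm_factor_nonzero: "norm_factor \<noteq> 0"
  using N_pos by simp

lemma card_C: "card C = N"
proof -
  have "of_nat N = (\<Sum>c\<in>C. zeta p ^ f 0 c * cnj (zeta p ^ f 0 c))"
    using orthogonal N_pos by simp
  also have "\<dots> = of_nat (card C)"
    by (simp add: zeta_power_mult_cnj)
  finally show ?thesis
    by (simp only: of_nat_eq_iff)
qed

lemma finite_C: "finite C"
  using card_C N_pos card.infinite by fastforce

lemma row_sum:
  assumes "j < N"
  shows "(\<Sum>z\<in>C. zeta p ^ f j z) = (if j = 0 then of_nat N else 0)"
proof -
  have "(\<Sum>z\<in>C. zeta p ^ f j z) = (\<Sum>z\<in>C. zeta p ^ f j z * cnj (zeta p ^ f 0 z))"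
    using first_row by simp
  thus ?thesis
    using orthogonal assms N_pos by simp
qed

lemma distinct_rows:
  assumes "j < N" "j' < N" "\<forall>c\<in>C. zeta p ^ f j c = zeta p ^ f j' c"
  shows "j = j'"
proof -
  have "(\<Sum>c\<in>C. zeta p ^ f j c * cnj (zeta p ^ f j' c))
      = (\<Sum>c\<in>C. zeta p ^ f j' c * cnj (zeta p ^ f j' c))"
    using assms(3) by (intro sum.cong) auto
  also have "\<dots> = of_nat N"
    by (simp add: zeta_power_mult_cnj card_C)
  finally show ?thesis
    using assms(1,2) orthogonal N_pos by (auto split: if_splits)
qed

lemma Q_vanishes_outside: "v \<in> Q \<Longrightarrow> x \<notin> product_code n m C \<Longrightarrow> v x = 0"
  by (auto simp: cspan_fin_def tensor_pow_phi)

lemma indicator_product_code_mem: "indicator (product_code n m C) \<in> Q"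
proof -
  have "state 0 x = norm_factor * indicator (product_code n m C) x" for x
    using first_row by (simp add: tensor_pow_phi product_code_def)
  hence "indicator (product_code n m C) = (\<lambda>x. inverse norm_factor * state 0 x)"
    using norm_factor_nonzero by (simp add: fun_eq_iff)
  thus ?thesis
    using cspan_fin_scale[OF cspan_fin_generator[OF N_pos]] by simp
qed

lemma sum_two_blocks_independent:
  assumes "v \<in> Q" "u \<in> C"
  shows "(\<Sum>z\<in>C. v (two_blocks n u z)) = (\<Sum>z\<in>C. v (two_blocks n (\<lambda>_. 0) z))"
proof -
  obtain w where v: "v = (\<lambda>x. \<Sum>j<N. w j * state j x)"
    using assms(1) by (auto simp: cspan_fin_def)
  have "(\<Sum>z\<in>C. v (two_blocks n u z)) = w 0 * norm_factor * of_nat N" if "u \<in> C" for u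
  proof -
    have "(\<Sum>z\<in>C. v (two_blocks n u z))
        = (\<Sum>j<N. w j * norm_factor * zeta p ^ f j u * (\<Sum>z\<in>C. zeta p ^ f j z))"
      using that lin_closed_C C_Fvec m_ge_2 first_column
      by (simp add: v tensor_pow_phi_two_blocks sum_distrib_left mult_ac sum.swap[of _ C])
    also have "\<dots> = w 0 * norm_factor * of_nat N"
      using that N_pos first_row by (simp add: row_sum if_distrib sum.delta cong: if_cong)
    finally show ?thesis .
  qed
  thus ?thesis
    using assms(2) lin_closed_zero[OF lin_closed_C] by simp
qed

lemma exists_period_two_blocks:
  assumes "stabilizer_code p r (n * m) Q" "u \<in> C"
  shows "\<exists>z\<in>C. two_blocks n u z \<in> periods (n * m) Q"
proof -
  let ?P = "periods (n * m) Q"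
  let ?Z = "\<lambda>u. {z \<in> C. two_blocks n u z \<in> ?P}"
  have "indicator ?P \<in> Q"
    using Q_vanishes_outside
    by (intro indicator_periods_mem_stabilizer_code[OF assms(1) lin_closed_product_code[OF lin_closed_C]
          _ indicator_product_code_mem]) blast
  hence "(\<Sum>z\<in>C. indicator ?P (two_blocks n u z))
      = (\<Sum>z\<in>C. indicator ?P (two_blocks n (\<lambda>_. 0) z) :: complex)"
    by (rule sum_two_blocks_independent[OF _ assms(2)])
  moreover have "(\<Sum>z\<in>C. indicator ?P (two_blocks n u' z)) = (of_nat (card (?Z u')) :: complex)" for u'
    using finite_C by (simp add: indicator_def Int_def)
  ultimately have "card (?Z u) = card (?Z (\<lambda>_. 0))"
    by (simp only: of_nat_eq_iff)
  moreover have "(\<lambda>_. 0) \<in> ?Z (\<lambda>_. 0)"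
    using lin_closed_zero[OF lin_closed_C] by (simp add: two_blocks_zero zero_mem_periods)
  ultimately have "card (?Z u) \<noteq> 0"
    using finite_C card_gt_0_iff[of "?Z (\<lambda>_. 0)"] by auto
  hence "?Z u \<noteq> {}"
    by (metis card.empty)
  thus ?thesis
    by blast
qed

lemma state_two_blocks:
  assumes "j < N" "u \<in> C" "z \<in> C"
  shows "state j (two_blocks n u z) = norm_factor * (zeta p ^ f j u * zeta p ^ f j z)"
  using tensor_pow_phi_two_blocks[OF lin_closed_C C_Fvec assms(2,3) m_ge_2] first_column assms(1)
  by simp

lemma row_additive_of_period:
  assumes "j < N" "a \<in> C" "b \<in> C" "z \<in> C" "two_blocks n b z \<in> periods (n * m) Q"
  shows "zeta p ^ f j (\<lambda>i. a i + b i) = zeta p ^ f j a * zeta p ^ f j b"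
proof -
  let ?h = "\<lambda>c. zeta p ^ f j c"
  have period: "state j (\<lambda>i. x i - two_blocks n b z i) = state j x" for x
    using periodsD[OF assms(5) cspan_fin_generator[OF assms(1)]] .
  have zero: "(\<lambda>_. 0) \<in> C"
    by (rule lin_closed_zero[OF lin_closed_C])
  have "norm_factor = state j (\<lambda>_. 0)"
    using state_two_blocks[OF assms(1) zero zero] first_column assms(1) by (simp add: two_blocks_zero)
  also have "\<dots> = state j (two_blocks n b z)"
    using period[of "two_blocks n b z"] by (simp add: two_blocks_diff two_blocks_zero)
  also have "\<dots> = norm_factor * (?h b * ?h z)"
    using state_two_blocks[OF assms(1,3,4)] .
  finally have "norm_factor = norm_factor * (?h b * ?h z)" .
  hence hbz: "?h b * ?h z = 1"
    using norm_factor_nonzero by (simp only: mult_cancel_left1) blast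
  have "norm_factor * ?h a = state j (two_blocks n a (\<lambda>_. 0))"
    using state_two_blocks[OF assms(1,2) zero] first_column assms(1) by simp
  also have "\<dots> = state j (two_blocks n (\<lambda>i. a i + b i) z)"
    using period[of "two_blocks n (\<lambda>i. a i + b i) z"] by (simp add: two_blocks_diff)
  also have "\<dots> = norm_factor * (?h (\<lambda>i. a i + b i) * ?h z)"
    using state_two_blocks[OF assms(1) lin_closed_add[OF lin_closed_C assms(2,3)] assms(4)] .
  finally have "norm_factor * ?h a = norm_factor * (?h (\<lambda>i. a i + b i) * ?h z)" .
  hence ha: "?h a = ?h (\<lambda>i. a i + b i) * ?h z"
    by (rule mult_left_cancel[OF norm_factor_nonzero, THEN iffD1])
  have "?h (\<lambda>i. a i + b i) = ?h (\<lambda>i. a i + b i) * (?h b * ?h z)"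
    using hbz by simp
  also have "\<dots> = ?h a * ?h b"
    using ha by (simp add: mult_ac)
  finally show ?thesis .
qed

lemma character_rows:
  assumes "stabilizer_code p r (n * m) Q" "j < N"
  shows "character_on C (\<lambda>c. zeta p ^ f j c)"
proof -
  have "zeta p ^ f j (\<lambda>i. a i + b i) = zeta p ^ f j a * zeta p ^ f j b" if "a \<in> C" "b \<in> C" for a b
    using exists_period_two_blocks[OF assms(1) that(2)] row_additive_of_period[OF assms(2) that] by blast
  thus ?thesis
    using first_column assms(2) by (simp add: character_on_def)
qed

end

theorem theorem4p2:
  fixes p r n k m :: nat
    and C :: "(nat \<Rightarrow> 'a::{finite,field}) set"
    and f :: "nat \<Rightarrow> (nat \<Rightarrow> 'a) \<Rightarrow> nat"
  assumes "prime p" and "r \<ge> 1" and "CARD('a) = p ^ r"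
    and "1 \<le> k" and "k < n" and "m \<ge> 2"
    and "linear_code n k C"
    and "\<forall>j<CARD('a) ^ k. \<forall>c\<in>C. f j c < p"
    and "\<forall>j<CARD('a) ^ k. \<forall>j'<CARD('a) ^ k.
           (\<Sum>c\<in>C. zeta p ^ f j c * cnj (zeta p ^ f j' c))
             = (if j = j' then of_nat (CARD('a) ^ k) else 0)"
    and "\<forall>c\<in>C. f 0 c = 0"
    and "\<forall>j<CARD('a) ^ k. f j (\<lambda>_. 0) = 0"
    and "stabilizer_code p r (n * m)
           (cspan_fin (CARD('a) ^ k) (\<lambda>j. tensor_pow n m (phi p (CARD('a) ^ k) C f j)))"
  shows "bh_equiv p (\<lambda>j c. zeta p ^ f j c) {0..<CARD('a) ^ k} C
           (kron_pow p (fourier p) (r * k)) {0..<p ^ (r * k)} {0..<p ^ (r * k)}"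
proof -
  have char: "CHAR('a) = p"
    using assms(1,3) by (rule CHAR_eq_prime_of_card)
  have closed: "lin_closed C"
    using assms(7) by (rule lin_closed_linear_code)
  interpret bh_tensor_states p n m "CARD('a) ^ k" C f
    using closed assms(6,7,9-11) by unfold_locales (auto simp: linear_code_def)
  have N: "CARD('a) ^ k = p ^ (r * k)"
    using assms(3) by (simp add: power_mult)
  have "bh_equiv p (\<lambda>j c. zeta p ^ f j c) {..<p ^ (r * k)} C
      (kron_pow p (fourier p) (r * k)) {..<p ^ (r * k)} {..<p ^ (r * k)}"
    using bh_equiv_kron_fourier_of_characters[OF assms(1) char closed finite_C]
      card_C assms(8) character_rows[OF assms(12)] distinct_rows
    unfolding N by blast
  thus ?thesis
    by (simp add: atLeast0LessThan N)
qed

end
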